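(* Let $y_1\in\mathbb R$, $H>0$, $\beta>1$, $\gamma>1$, $q>0$, and $\beta'$ with $\frac1\beta+\frac1{\beta'}=1$. Define, for $x,y\ge y_1$, $$g(x,y)=\begin{cases}1+H(1+|x|)^{-\gamma}, & y_1\le x\le y,\\ He^{(y-x)/q}, & y_1\le y<x<\infty,\end{cases}$$ and for a measurable $\phi:[y_1,\infty)\to[0,\infty)$ with $\int_{y_1}^\infty\phi^{\beta'}\le1$ let $$F(y)=y-\Big(\int_{y_1}^\infty g(x,y)\phi(x)\,dx\Big)^\beta,\qquad y\ge y_1.$$ Then there exists a constant $C$ independent of $\phi$ such that $\int_{y_1}^\infty e^{-F(y)}\,dy\le C$. *)

theory Defs
  imports "HOL-Analysis.Analysis"
begin

definition gker :: "real \<Rightarrow> real \<Rightarrow> real \<Rightarrow> real \<Rightarrow> real \<Rightarrow> real" where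
  "gker H \<gamma> q x y = (if x \<le> y then 1 + H * (1 + \<bar>x\<bar>) powr (-\<gamma>) else H * exp ((y - x) / q))"

definition Ffun :: "real \<Rightarrow> real \<Rightarrow> real \<Rightarrow> real \<Rightarrow> real \<Rightarrow> (real \<Rightarrow> real) \<Rightarrow> real \<Rightarrow> real" where
  "Ffun y1 H \<beta> \<gamma> q \<phi> y = y - (LBINT x:{y1..}. gker H \<gamma> q x y * \<phi> x) powr \<beta>"

end

theory Submission
  imports Defs
begin

text \<open>Write \<open>I(y) = \<integral> g(x,y) \<phi>(x) dx\<close>, so that \<open>e\<^bsup>-F(y)\<^esup> = e\<^bsup>I(y)\<^sup>\<beta> - y\<^esup>\<close>. Splitting the integral
  at a point \<open>s \<le> y\<close> and using Young's inequality with separate weights on \<open>[y1,s]\<close> and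
  \<open>(s,\<infinity>)\<close> bounds \<open>I(y)\<close> in terms of \<open>\<integral> g\<^sup>\<beta>\<close> over the two pieces, which exceeds the length of
  the piece by at most a constant \<open>K\<close>, and the masses \<open>m(s)\<close>, \<open>u(s)\<close> of \<open>\<phi>\<^bsup>\<beta>'\<^esup>\<close> on them.
  Optimising the weights gives \<open>I(y)\<^sup>\<beta> \<le> y - y1 + 2K\<close>. If \<open>I\<^sup>\<beta>\<close> comes within \<open>\<mu>\<close> of this
  maximum at two points \<open>s < y\<close> far enough out, near-maximality at \<open>s\<close> forces \<open>u(s)\<close> to be small,
  and then near-maximality at \<open>y\<close> forces \<open>y - s = O(1 + \<mu>)\<close>. So the set where
  \<open>I(y)\<^sup>\<beta> - y \<ge> -y1 - \<mu>\<close> has measure \<open>O(1 + \<mu>)\<close>, and summing over \<open>\<mu> \<in> \<nat>\<close> with weights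
  \<open>e\<^bsup>-\<mu>\<^esup>\<close> bounds \<open>\<integral> e\<^bsup>-F\<^esup>\<close> independently of \<open>\<phi>\<close>.\<close>

lemma exp_le_one_plus_mult_exp:
  fixes x :: real assumes "x \<ge> 0" shows "exp x \<le> 1 + x * exp x"
proof -
  have "(1 - x) * exp x \<le> exp (-x) * exp x"
    using exp_ge_add_one_self[of "-x"] by (intro mult_right_mono) auto
  thus ?thesis by (simp add: exp_minus algebra_simps)
qed

lemma powr_le_exp_mult:
  fixes a e p :: real assumes "a > 0" "a \<le> 1 + e" "p \<ge> 0"
  shows "a powr p \<le> exp (p * e)"
proof -
  have "p * ln a \<le> p * e"
    using assms ln_le_minus_one[of a] by (intro mult_left_mono) auto
  thus ?thesis using assms(1) by (simp add: powr_def mult.commute)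
qed

section \<open>Integrals on half-lines\<close>

lemma nn_integral_shifted_powr:
  fixes a \<gamma> :: real assumes "\<gamma> > 1"
  shows "(\<integral>\<^sup>+ x \<in> {a..}. ennreal ((1 + x - a) powr (-\<gamma>)) \<partial>lborel) = ennreal (1 / (\<gamma> - 1))"
proof -
  define F where "F x = - ((1 + x - a) powr (1 - \<gamma>) / (\<gamma> - 1))" for x
  have "(\<integral>\<^sup>+ x \<in> {a..}. ennreal ((1 + x - a) powr (-\<gamma>)) \<partial>lborel) = ennreal (0 - F a)"
  proof (rule nn_integral_FTC_atLeast)
    fix x assume "a \<le> x"
    have "DERIV (\<lambda>x. (1 + x - a) powr (1 - \<gamma>)) x :> (1 - \<gamma>) * (1 + x - a) powr (1 - \<gamma> - of_nat 1) * 1"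
      by (rule DERIV_fun_powr) (use \<open>a \<le> x\<close> in \<open>auto intro!: derivative_eq_intros\<close>)
    hence "DERIV F x :> - ((1 - \<gamma>) * (1 + x - a) powr (- \<gamma>) / (\<gamma> - 1))"
      unfolding F_def by (auto intro!: DERIV_minus DERIV_cdivide)
    moreover have "- ((1 - \<gamma>) * X / (\<gamma> - 1)) = X" for X using assms by (simp add: field_simps)
    ultimately show "DERIV F x :> (1 + x - a) powr (-\<gamma>)" by simp
  next
    have "filterlim (\<lambda>x. 1 - a + x) at_top at_top"
      by (intro filterlim_tendsto_add_at_top[OF tendsto_const filterlim_ident])
    hence "((\<lambda>x. (1 + x - a) powr (1 - \<gamma>)) \<longlongrightarrow> 0) at_top"
      using assms by (intro tendsto_neg_powr) (auto simp: algebra_simps)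
    hence "(F \<longlongrightarrow> - (0 / (\<gamma> - 1))) at_top"
      unfolding F_def using assms by (intro tendsto_intros) auto
    thus "(F \<longlongrightarrow> 0) at_top" by simp
  qed auto
  thus ?thesis unfolding F_def using assms by simp
qed

lemma nn_integral_exp_decay:
  fixes a c :: real assumes "c > 0"
  shows "(\<integral>\<^sup>+ x \<in> {a..}. ennreal (exp (c * (a - x))) \<partial>lborel) = ennreal (1 / c)"
proof -
  have "(\<integral>\<^sup>+ x \<in> {a..}. ennreal (exp (c * (a - x))) \<partial>lborel) = ennreal (0 - (- exp (c * (a - a)) / c))"
  proof (rule nn_integral_FTC_atLeast[where F = "\<lambda>x. - exp (c * (a - x)) / c"])
    show "DERIV (\<lambda>x. - exp (c * (a - x)) / c) x :> exp (c * (a - x))" if "a \<le> x" for x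
      using assms by (auto intro!: derivative_eq_intros)
    have "filterlim (\<lambda>x. - a + x) at_top at_top"
      by (intro filterlim_tendsto_add_at_top[OF tendsto_const filterlim_ident])
    hence "filterlim (\<lambda>x. (- c) * (- a + x)) at_bot at_top"
      using assms by (intro filterlim_tendsto_neg_mult_at_bot[OF tendsto_const]) auto
    moreover have "(\<lambda>x. (- c) * (- a + x)) = (\<lambda>x. c * (a - x))" by (auto simp: algebra_simps)
    ultimately have "filterlim (\<lambda>x. c * (a - x)) at_bot at_top" by simp
    hence "((\<lambda>x. exp (c * (a - x))) \<longlongrightarrow> 0) at_top"
      by (rule filterlim_compose[OF exp_at_bot])
    hence "((\<lambda>x. - exp (c * (a - x)) / c) \<longlongrightarrow> - 0 / c) at_top"
      using assms by (intro tendsto_intros) auto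
    thus "((\<lambda>x. - exp (c * (a - x)) / c) \<longlongrightarrow> 0) at_top" by simp
  qed auto
  thus ?thesis by simp
qed

lemma nn_integral_one_plus_shifted_powr_le:
  fixes a c \<gamma> :: real and S :: "real set"
  assumes "\<gamma> > 1" "c \<ge> 0" "S \<subseteq> {a..}" "S \<in> sets lborel"
  shows "(\<integral>\<^sup>+ x \<in> S. ennreal (1 + c * (1 + x - a) powr (-\<gamma>)) \<partial>lborel)
    \<le> emeasure lborel S + ennreal (c / (\<gamma> - 1))"
proof -
  have "(\<integral>\<^sup>+ x \<in> S. ennreal (1 + c * (1 + x - a) powr (-\<gamma>)) \<partial>lborel)
      = emeasure lborel S + ennreal c * (\<integral>\<^sup>+ x \<in> S. ennreal ((1 + x - a) powr (-\<gamma>)) \<partial>lborel)"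
    using assms
    by (simp add: ennreal_plus ennreal_mult nn_integral_add nn_integral_cmult distrib_right mult.assoc)
  also have "(\<integral>\<^sup>+ x \<in> S. ennreal ((1 + x - a) powr (-\<gamma>)) \<partial>lborel)
      \<le> (\<integral>\<^sup>+ x \<in> {a..}. ennreal ((1 + x - a) powr (-\<gamma>)) \<partial>lborel)"
    using assms by (intro nn_integral_mono) (auto split: split_indicator)
  also have "\<dots> = ennreal (1 / (\<gamma> - 1))" using assms(1) by (rule nn_integral_shifted_powr)
  finally show ?thesis
    using assms by (simp add: ennreal_mult[symmetric] add_left_mono mult_left_mono)
qed

lemma set_integral_eq_nn_integral:
  fixes f :: "'a \<Rightarrow> real"
  assumes "set_borel_measurable M A f" "\<And>x. x \<in> A \<Longrightarrow> f x \<ge> 0"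
  shows "(LINT x:A|M. f x) = enn2real (\<integral>\<^sup>+ x \<in> A. ennreal (f x) \<partial>M)"
proof -
  have "(LINT x:A|M. f x) = integral\<^sup>L M (\<lambda>x. indicator A x * f x)"
    unfolding set_lebesgue_integral_def by simp
  also have "\<dots> = enn2real (\<integral>\<^sup>+ x. ennreal (indicator A x * f x) \<partial>M)"
    using assms by (intro integral_eq_nn_integral AE_I2)
      (auto simp: set_borel_measurable_def split: split_indicator)
  also have "(\<integral>\<^sup>+ x. ennreal (indicator A x * f x) \<partial>M) = (\<integral>\<^sup>+ x \<in> A. ennreal (f x) \<partial>M)"
    by (intro nn_integral_cong) (simp split: split_indicator)
  finally show ?thesis .
qed

section \<open>Integrability from close superlevel sets\<close>

lemma superlevel_set_subset_intervals:
  fixes f :: "real \<Rightarrow> real"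
  assumes close: "\<And>s y. a + T \<le> s \<Longrightarrow> s \<le> y \<Longrightarrow> f s \<ge> c \<Longrightarrow> f y \<ge> c \<Longrightarrow> y - s \<le> D"
  obtains z where "{y. a \<le> y \<and> f y \<ge> c} \<subseteq> {a..a + T} \<union> {z - D..z + D}"
proof (cases "\<exists>z. a + T \<le> z \<and> f z \<ge> c")
  case True
  then obtain z where z: "a + T \<le> z" "f z \<ge> c" by blast
  show thesis
  proof (rule that[of z], intro subsetI)
    fix y assume "y \<in> {y. a \<le> y \<and> f y \<ge> c}"
    hence y: "a \<le> y" "c \<le> f y" by auto
    show "y \<in> {a..a + T} \<union> {z - D..z + D}"
    proof (cases "y \<le> a + T")
      case False
      hence "\<bar>y - z\<bar> \<le> D" using close[of z y] close[of y z] z y by (cases "z \<le> y") auto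
      thus ?thesis by (auto simp: abs_le_iff)
    qed (use y in auto)
  qed
next
  case False
  have "y \<le> a + T" if "f y \<ge> c" for y using False that by (meson le_cases)
  thus thesis by (intro that[of 0]) auto
qed

lemma nn_integral_le_of_cover:
  fixes g :: "real \<Rightarrow> ennreal" and J :: "nat \<Rightarrow> real set" and E Z :: real
  assumes J: "\<And>n. J n \<in> sets lborel" "\<And>n. emeasure lborel (J n) \<le> ennreal (Z * (real n + 1))"
    and "E \<ge> 0" "Z \<ge> 0"
    and cover: "\<And>y. g y \<le> (\<Sum>n. ennreal (E * exp (- real n)) * indicator (J n) y)"
  shows "integral\<^sup>N lborel g \<le> ennreal (2 * E * Z / (1 - exp (-1/2)))"
proof -
  have "integral\<^sup>N lborel g \<le> (\<integral>\<^sup>+ y. (\<Sum>n. ennreal (E * exp (- real n)) * indicator (J n) y) \<partial>lborel)"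
    using cover by (intro nn_integral_mono) simp
  also have "\<dots> = (\<Sum>n. ennreal (E * exp (- real n)) * emeasure lborel (J n))"
    using J(1) by (subst nn_integral_suminf) (auto intro!: suminf_cong nn_integral_cmult_indicator)
  also have "\<dots> \<le> (\<Sum>n. ennreal (2 * E * Z * exp (-1/2) ^ n))"
  proof (intro suminf_le summableI)
    fix n :: nat
    have "ennreal (E * exp (- real n)) * emeasure lborel (J n)
        \<le> ennreal (E * exp (- real n)) * ennreal (Z * (real n + 1))"
      using J(2) by (intro mult_left_mono) auto
    also have "\<dots> = ennreal (E * Z * (exp (- real n) * (real n + 1)))"
      using assms by (simp add: ennreal_mult[symmetric] mult_ac)
    also have "\<dots> \<le> ennreal (E * Z * (2 * exp (-1/2) ^ n))"
    proof (intro ennreal_leI mult_left_mono)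
      have "real n + 1 \<le> 2 * exp (real n / 2)" using exp_ge_add_one_self[of "real n / 2"] by linarith
      hence "exp (- real n) * (real n + 1) \<le> exp (- real n) * (2 * exp (real n / 2))"
        by (intro mult_left_mono) auto
      also have "\<dots> = 2 * exp (-1/2) ^ n" by (simp add: exp_of_nat_mult[symmetric] mult_exp_exp)
      finally show "exp (- real n) * (real n + 1) \<le> 2 * exp (-1/2) ^ n" .
    qed (use assms in simp)
    finally show "ennreal (E * exp (- real n)) * emeasure lborel (J n) \<le> ennreal (2 * E * Z * exp (-1/2) ^ n)"
      by (simp add: mult_ac)
  qed
  also have "\<dots> = ennreal (\<Sum>n. 2 * E * Z * exp (-1/2) ^ n)"
    by (rule suminf_ennreal2) (use assms in \<open>auto intro!: summable_mult summable_geometric\<close>)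
  also have "(\<Sum>n. 2 * E * Z * exp (-1/2) ^ n) = 2 * E * Z * (1 / (1 - exp (-1/2)))"
    by (subst suminf_mult) (auto intro!: summable_geometric simp: suminf_geometric)
  finally show ?thesis by simp
qed

text \<open>Each \<open>y \<ge> a\<close> lies in the superlevel set \<open>{f \<ge> -n}\<close> for \<open>n = \<lceil>-f y\<rceil>\<close>, where
  \<open>exp (f y + d) \<le> exp (L + d + 1 - n)\<close>, and that set is covered by two intervals of total
  length \<open>T n + 2 D n \<le> Z (n + 1)\<close>.\<close>
lemma nn_integral_exp_le_of_close_superlevels:
  fixes f T D :: "real \<Rightarrow> real" and a d L Z :: real
  assumes upper: "\<And>y. a \<le> y \<Longrightarrow> f y \<le> L" and "L \<ge> 0"
    and close: "\<And>mu s y. mu \<ge> 0 \<Longrightarrow> a + T mu \<le> s \<Longrightarrow> s \<le> y \<Longrightarrow> f s \<ge> - mu \<Longrightarrow> f y \<ge> - mu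
      \<Longrightarrow> y - s \<le> D mu"
    and T_nonneg: "\<And>mu. mu \<ge> 0 \<Longrightarrow> T mu \<ge> 0" and D_nonneg: "\<And>mu. mu \<ge> 0 \<Longrightarrow> D mu \<ge> 0"
    and Z: "\<And>mu. mu \<ge> 0 \<Longrightarrow> T mu + 2 * D mu \<le> Z * (mu + 1)"
  shows "(\<integral>\<^sup>+ y \<in> {a..}. ennreal (exp (f y + d)) \<partial>lborel)
    \<le> ennreal (2 * exp (L + d + 1) * Z / (1 - exp (-1/2)))"
proof -
  define E where "E = exp (L + d + 1)"
  have "\<exists>z. {y. a \<le> y \<and> f y \<ge> - real n} \<subseteq> {a..a + T n} \<union> {z - D n..z + D n}" for n :: nat
    by (rule superlevel_set_subset_intervals[where T = "T n" and c = "- real n" and D = "D n"])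
       (use close[of "real n"] in auto)
  then obtain z where z: "\<And>n::nat. {y. a \<le> y \<and> f y \<ge> - real n} \<subseteq> {a..a + T n} \<union> {z n - D n..z n + D n}"
    by metis
  define J where "J n = {a..a + T n} \<union> {z n - D n..z n + D n}" for n :: nat
  have J_sets: "J n \<in> sets lborel" for n unfolding J_def by simp
  have measure: "emeasure lborel (J n) \<le> ennreal (Z * (real n + 1))" for n
  proof -
    have "emeasure lborel (J n) \<le> emeasure lborel {a..a + T n} + emeasure lborel {z n - D n..z n + D n}"
      unfolding J_def by (rule emeasure_subadditive) auto
    also have "\<dots> = ennreal (T n + 2 * D n)"
      using T_nonneg[of n] D_nonneg[of n] by (simp add: ennreal_plus[symmetric] del: ennreal_plus)
    also have "\<dots> \<le> ennreal (Z * (real n + 1))" using Z[of n] by (intro ennreal_leI) simp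
    finally show ?thesis .
  qed
  have cover: "ennreal (exp (f y + d)) * indicator {a..} y
      \<le> (\<Sum>n. ennreal (E * exp (- real n)) * indicator (J n) y)" for y
  proof (cases "a \<le> y")
    case True
    define n where "n = nat \<lceil>- f y\<rceil>"
    have "f y \<ge> - real n" unfolding n_def by linarith
    hence "y \<in> J n" using z[of n] True unfolding J_def by blast
    have "f y \<le> L + 1 - real n" using upper[OF True] \<open>L \<ge> 0\<close> unfolding n_def by linarith
    hence "ennreal (exp (f y + d)) * indicator {a..} y \<le> ennreal (E * exp (- real n)) * indicator (J n) y"
      using True \<open>y \<in> J n\<close> unfolding E_def mult_exp_exp by (simp add: ennreal_leI)
    also have "\<dots> \<le> (\<Sum>i. ennreal (E * exp (- real i)) * indicator (J i) y)"
      using sum_le_suminf[OF summableI, of "{n}" "\<lambda>i. ennreal (E * exp (- real i)) * indicator (J i) y"]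
      by (simp only: sum.insert[OF finite.emptyI empty_iff[THEN iffD1, THEN notI]] sum.empty add_0_right) simp
    finally show ?thesis .
  qed simp
  have "Z \<ge> 0" using Z[of 0] T_nonneg[of 0] D_nonneg[of 0] by simp
  from nn_integral_le_of_cover[OF J_sets measure _ this cover] show ?thesis
    unfolding E_def by simp
qed

section \<open>Young's inequality with weights\<close>

locale conjugate_exponents =
  fixes b b' :: real
  assumes gt_one: "b > 1" and conjugate: "1 / b + 1 / b' = 1"
begin

lemma gt_one': "b' > 1"
proof -
  have "1 / b' = 1 - 1 / b" using conjugate by simp
  moreover have "0 < 1 / b" "1 / b < 1" using gt_one by auto
  ultimately have "0 < 1 / b'" "1 / b' < 1" by linarith+
  thus ?thesis by (simp add: divide_less_eq split: if_splits)
qed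

lemma Youngs_inequality_weighted:
  fixes w f t :: real assumes "w \<ge> 0" "f \<ge> 0" "t > 0"
  shows "w * f \<le> t powr b / b * w powr b + t powr (-b') / b' * f powr b'"
proof -
  have "w * f = (t * w) * (f / t)" using assms by simp
  also have "\<dots> \<le> (t * w) powr b / b + (f / t) powr b' / b'"
    using assms gt_one gt_one' conjugate by (intro Youngs_inequality) auto
  also have "(t * w) powr b = t powr b * w powr b" using assms by (simp add: powr_mult)
  also have "(f / t) powr b' = t powr (-b') * f powr b'"
    using assms by (simp add: powr_divide powr_minus_divide)
  finally show ?thesis by (simp add: mult_ac)
qed

lemma nn_integral_mult_le_Young:
  assumes [measurable]: "f \<in> borel_measurable lborel" "g \<in> borel_measurable lborel" "S \<in> sets lborel"
    and "\<And>x. f x \<ge> 0" "\<And>x. g x \<ge> 0" "t > 0"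
  shows "(\<integral>\<^sup>+ x \<in> S. ennreal (f x * g x) \<partial>lborel)
    \<le> ennreal (t powr b / b) * (\<integral>\<^sup>+ x \<in> S. ennreal (f x powr b) \<partial>lborel)
      + ennreal (t powr (-b') / b') * (\<integral>\<^sup>+ x \<in> S. ennreal (g x powr b') \<partial>lborel)"
proof -
  have "(\<integral>\<^sup>+ x \<in> S. ennreal (f x * g x) \<partial>lborel)
      \<le> (\<integral>\<^sup>+ x \<in> S. ennreal (t powr b / b) * ennreal (f x powr b)
           + ennreal (t powr (-b') / b') * ennreal (g x powr b') \<partial>lborel)"
    using Youngs_inequality_weighted[of "f x" "g x" t for x] assms gt_one gt_one'
    by (intro nn_integral_mono)
      (auto split: split_indicator intro!: ennreal_leI
        simp: ennreal_mult[symmetric] ennreal_plus[symmetric] simp del: ennreal_plus)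
  also have "\<dots> = ennreal (t powr b / b) * (\<integral>\<^sup>+ x \<in> S. ennreal (f x powr b) \<partial>lborel)
      + ennreal (t powr (-b') / b') * (\<integral>\<^sup>+ x \<in> S. ennreal (g x powr b') \<partial>lborel)"
    by (simp add: distrib_right mult.assoc nn_integral_add nn_integral_cmult)
  finally show ?thesis .
qed

text \<open>Young's bound for \<open>\<integral> g \<phi>\<close> with weight \<open>t\<close>, where \<open>A = \<integral> g\<^sup>b\<close> and \<open>m = \<integral> \<phi>\<^bsup>b'\<^esup>\<close>.\<close>
definition young_majorant :: "real \<Rightarrow> real \<Rightarrow> real \<Rightarrow> real" where
  "young_majorant t A m = t powr b * A / b + t powr (-b') * m / b'"

lemma young_majorant_nonneg: "t > 0 \<Longrightarrow> A \<ge> 0 \<Longrightarrow> m \<ge> 0 \<Longrightarrow> young_majorant t A m \<ge> 0"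
  using gt_one gt_one' unfolding young_majorant_def by simp

lemma young_majorant_add:
  "young_majorant t A m + young_majorant t B u = young_majorant t (A + B) (m + u)"
  by (simp add: young_majorant_def add_divide_distrib distrib_left)

lemma young_majorant_scale:
  assumes "c > 0" "t > 0"
  shows "young_majorant (c * t) A m = young_majorant t (c powr b * A) (c powr (-b') * m)"
  using assms by (simp add: young_majorant_def powr_mult mult_ac)

lemma young_majorant_mono:
  assumes "t > 0" "A \<le> A'" "m \<le> m'"
  shows "young_majorant t A m \<le> young_majorant t A' m'"
  using assms gt_one gt_one' unfolding young_majorant_def
  by (intro add_mono divide_right_mono mult_left_mono) auto

lemma young_majorant_optimal:
  assumes "P > 0" "Q > 0"
  shows "young_majorant ((Q / P) powr (1 / (b * b'))) P Q = P powr (1 / b) * Q powr (1 / b')"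
proof -
  have bb: "b' = b / (b - 1)" using gt_one gt_one' conjugate by (auto simp: field_simps)
  obtain p q where pq: "P = exp p" "Q = exp q" using assms by (metis exp_ln)
  have "t powr b * P = P powr (1/b) * Q powr (1/b')" "t powr (-b') * Q = P powr (1/b) * Q powr (1/b')"
    if "t = (Q / P) powr (1 / (b * b'))" for t
    using gt_one unfolding that powr_def pq
    by (simp_all add: exp_diff[symmetric] exp_add[symmetric] bb field_simps)
  thus ?thesis
    unfolding young_majorant_def using conjugate
    by (metis add_divide_distrib distrib_left mult.right_neutral times_divide_eq_right)
qed

lemma ennreal_young_majorant:
  assumes "t > 0" "A \<ge> 0" "m \<ge> 0"
  shows "ennreal (t powr b / b) * ennreal A + ennreal (t powr (-b') / b') * ennreal m
    = ennreal (young_majorant t A m)"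
  using assms gt_one gt_one' unfolding young_majorant_def
  by (simp add: ennreal_mult[symmetric] ennreal_plus[symmetric] del: ennreal_plus)

lemma enn2real_le_young_majorant_add:
  assumes "X \<le> (ennreal (t1 powr b / b) * ennreal A + ennreal (t1 powr (-b') / b') * M1)
      + (ennreal (t2 powr b / b) * ennreal B + ennreal (t2 powr (-b') / b') * M2)"
    and "t1 > 0" "t2 > 0" "A \<ge> 0" "B \<ge> 0" "M1 < top" "M2 < top"
  shows "enn2real X \<le> young_majorant t1 A (enn2real M1) + young_majorant t2 B (enn2real M2)"
proof (rule enn2real_leI)
  show "0 \<le> young_majorant t1 A (enn2real M1) + young_majorant t2 B (enn2real M2)"
    using assms by (intro add_nonneg_nonneg young_majorant_nonneg) auto
  have "M1 = ennreal (enn2real M1)" "M2 = ennreal (enn2real M2)" using assms by simp_all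
  hence "X \<le> ennreal (young_majorant t1 A (enn2real M1)) + ennreal (young_majorant t2 B (enn2real M2))"
    using assms(1) assms(2-5) by (metis ennreal_young_majorant enn2real_nonneg)
  also have "\<dots> = ennreal (young_majorant t1 A (enn2real M1) + young_majorant t2 B (enn2real M2))"
    using assms by (intro ennreal_plus[symmetric] young_majorant_nonneg) auto
  finally show "X \<le> ennreal (young_majorant t1 A (enn2real M1) + young_majorant t2 B (enn2real M2))" .
qed

text \<open>Minimising over the weight: this is H\<ouml>lder's inequality in disguise.\<close>
lemma powr_le_of_young_majorant:
  assumes "P > 0" "Q > 0" "I \<ge> 0" and bound: "\<And>t. t > 0 \<Longrightarrow> I \<le> young_majorant t P Q"
  shows "I powr b \<le> P * Q powr (b - 1)"
proof -
  have "I \<le> P powr (1 / b) * Q powr (1 / b')"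
    using bound[of "(Q / P) powr (1 / (b * b'))"] young_majorant_optimal assms by simp
  hence "I powr b \<le> (P powr (1 / b) * Q powr (1 / b')) powr b"
    using assms gt_one by (intro powr_mono2) auto
  also have "\<dots> = P * Q powr (b / b')"
    using assms gt_one by (simp add: powr_mult powr_powr)
  also have "b / b' = b - 1" using gt_one gt_one' conjugate by (auto simp: field_simps)
  finally show ?thesis .
qed

definition tail_factor :: real where
  "tail_factor = 2 / ((b - 1) * (1 - 2 powr (-b')))"

lemma tail_factor_pos: "tail_factor > 0"
proof -
  have "2 powr (-b') < 2 powr 0" using gt_one' by (intro powr_less_mono) auto
  thus ?thesis using gt_one unfolding tail_factor_def by auto
qed

lemma split_bound_powr_le:
  assumes "A \<ge> 0" "B \<ge> 0" "A + B > 0" "m \<ge> 0" "u \<ge> 0" "m + u \<le> 1" "I \<ge> 0"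
    and split: "\<And>t1 t2. t1 > 0 \<Longrightarrow> t2 > 0 \<Longrightarrow> I \<le> young_majorant t1 A m + young_majorant t2 B u"
  shows "I powr b \<le> A + B"
proof -
  have "I powr b \<le> (A + B) * 1 powr (b - 1)"
  proof (rule powr_le_of_young_majorant)
    fix t :: real assume "t > 0"
    hence "I \<le> young_majorant t (A + B) (m + u)" using split[of t t] by (simp add: young_majorant_add)
    also have "\<dots> \<le> young_majorant t (A + B) 1" using \<open>t > 0\<close> assms by (intro young_majorant_mono) auto
    finally show "I \<le> young_majorant t (A + B) 1" .
  qed (use assms in auto)
  thus ?thesis by simp
qed

lemma powr_le_of_split_bound_doubled:
  assumes "A > 0" "K \<ge> 0" "m \<ge> 0" "u \<ge> 0" "m + u \<le> 1" "I \<ge> 0"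
    and split: "\<And>t1 t2. t1 > 0 \<Longrightarrow> t2 > 0 \<Longrightarrow> I \<le> young_majorant t1 A m + young_majorant t2 K u"
  shows "I powr b \<le> (A + 2 powr b * K) * exp (- ((b - 1) * (1 - 2 powr (-b')) * u))"
proof -
  define c where "c = 1 - 2 powr (-b')"
  have "2 powr (-b') < 2 powr 0" using gt_one' by (intro powr_less_mono) auto
  hence c: "0 < c" "c < 1" unfolding c_def by auto
  have "c * u \<le> c" using c assms by (simp add: mult_left_le)
  hence Q: "1 - c * u > 0" using c by linarith
  have "I powr b \<le> (A + 2 powr b * K) * (1 - c * u) powr (b - 1)"
  proof (rule powr_le_of_young_majorant)
    fix t :: real assume t: "t > 0"
    have "I \<le> young_majorant t A m + young_majorant (2 * t) K u" using split[of t "2 * t"] t by simp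
    also have "\<dots> = young_majorant t (A + 2 powr b * K) (m + 2 powr (-b') * u)"
      using t by (simp add: young_majorant_scale young_majorant_add)
    also have "\<dots> \<le> young_majorant t (A + 2 powr b * K) (1 - c * u)"
      using t assms by (intro young_majorant_mono) (auto simp: c_def algebra_simps)
    finally show "I \<le> young_majorant t (A + 2 powr b * K) (1 - c * u)" .
  qed (use assms Q in \<open>auto intro: add_pos_nonneg\<close>)
  also have "\<dots> \<le> (A + 2 powr b * K) * exp (- ((b - 1) * c * u))"
    using Q gt_one powr_le_exp_mult[of "1 - c * u" "- (c * u)" "b - 1"] assms
    by (intro mult_left_mono) (auto simp: mult.assoc)
  finally show ?thesis unfolding c_def .
qed

text \<open>If \<open>I\<^sup>b\<close> is close to its maximal value \<open>A\<close>, the mass \<open>u\<close> beyond the split point is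
  small: doubling the second weight trades \<open>u\<close> against the small second block \<open>K\<close>.\<close>
lemma split_bound_tail_mass_le:
  assumes "A > 0" "K \<ge> 0" "mu \<ge> 0" "A \<ge> 2 * (K + mu)" "m \<ge> 0" "u \<ge> 0" "m + u \<le> 1" "I \<ge> 0"
    and split: "\<And>t1 t2. t1 > 0 \<Longrightarrow> t2 > 0 \<Longrightarrow> I \<le> young_majorant t1 A m + young_majorant t2 K u"
    and near_max: "I powr b \<ge> A - K - mu"
  shows "u \<le> tail_factor * (K + mu + 2 powr b * K) / A"
proof -
  define x where "x = (b - 1) * (1 - 2 powr (-b')) * u"
  have "2 powr (-b') < 2 powr 0" using gt_one' by (intro powr_less_mono) auto
  hence x: "x \<ge> 0" "(b - 1) * (1 - 2 powr (-b')) * A > 0"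
    using gt_one assms unfolding x_def by auto
  have "A - K - mu \<le> (A + 2 powr b * K) * exp (- x)"
    using near_max powr_le_of_split_bound_doubled[OF assms(1,2,5-8) split] unfolding x_def by linarith
  hence "(A - K - mu) * exp x \<le> A + 2 powr b * K"
    by (simp add: exp_minus divide_inverse[symmetric] pos_le_divide_eq)
  moreover have "(A - K - mu) * (1 + x) \<le> (A - K - mu) * exp x"
    using assms by (intro mult_left_mono exp_ge_add_one_self) auto
  ultimately have "(A - K - mu) * x \<le> K + mu + 2 powr b * K" by (simp add: algebra_simps)
  moreover have "A / 2 * x \<le> (A - K - mu) * x" using assms x by (intro mult_right_mono) auto
  ultimately have "u * ((b - 1) * (1 - 2 powr (-b')) * A) \<le> 2 * (K + mu + 2 powr b * K)"
    unfolding x_def by (simp add: field_simps)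
  thus ?thesis using x(2) unfolding tail_factor_def by (simp add: pos_le_divide_eq mult_ac)
qed

text \<open>Conversely, once the tail mass \<open>u \<le> U\<close> is small, near-maximality of \<open>I\<^sup>b\<close> forces the
  second block \<open>B\<close> to be short: shrinking the second weight by \<open>4\<^bsup>-1/b\<^esup>\<close> costs only a
  factor \<open>4\<^bsup>b'/b\<^esup>\<close> on \<open>u\<close>.\<close>
lemma split_bound_head_length_le:
  assumes "A > 0" "B \<ge> 0" "K \<ge> 0" "mu \<ge> 0" "m \<ge> 0" "m \<le> 1" "u \<ge> 0" "u \<le> U" "I \<ge> 0"
    and small: "4 powr (b' / b) * U \<le> 1" "(b - 1) * exp (b - 1) * (4 powr (b' / b) * U) \<le> 1"
    and split: "\<And>t1 t2. t1 > 0 \<Longrightarrow> t2 > 0 \<Longrightarrow> I \<le> young_majorant t1 A m + young_majorant t2 B u"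
    and near_max: "I powr b \<ge> A + B - 2 * K - mu"
  shows "B \<le> 2 * (2 * K + mu + (b - 1) * exp (b - 1) * (4 powr (b' / b) * U) * A)"
proof -
  define \<rho> where "\<rho> = 4 powr (-1 / b)"
  define e where "e = 4 powr (b' / b) * U"
  define d where "d = (b - 1) * exp (b - 1)"
  have "\<rho> powr b = 4 powr (-1 / b * b)" "\<rho> powr (-b') = 4 powr (-1 / b * -b')"
    unfolding \<rho>_def by (rule powr_powr)+
  hence \<rho>: "\<rho> > 0" "\<rho> powr b = 1 / 4" "\<rho> powr (-b') = 4 powr (b' / b)"
    using gt_one unfolding \<rho>_def by (auto simp: powr_minus_divide)
  have e: "e \<ge> 0" "e \<le> 1" using assms small unfolding e_def by auto
  have "I powr b \<le> (A + B / 4) * (1 + e) powr (b - 1)"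
  proof (rule powr_le_of_young_majorant)
    fix t :: real assume t: "t > 0"
    have "I \<le> young_majorant t A m + young_majorant (\<rho> * t) B u" using split[of t "\<rho> * t"] t \<rho> by simp
    also have "\<dots> = young_majorant t (A + B / 4) (m + 4 powr (b' / b) * u)"
      unfolding young_majorant_scale[OF \<rho>(1) t] \<rho>(2,3) young_majorant_add by simp
    also have "\<dots> \<le> young_majorant t (A + B / 4) (1 + e)"
      using t assms unfolding e_def by (intro young_majorant_mono add_mono mult_left_mono) auto
    finally show "I \<le> young_majorant t (A + B / 4) (1 + e)" .
  qed (use assms e in auto)
  also have "(1 + e) powr (b - 1) \<le> exp ((b - 1) * e)"
    using e gt_one by (intro powr_le_exp_mult) auto
  also have "\<dots> \<le> 1 + (b - 1) * e * exp ((b - 1) * e)"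
    using e gt_one by (intro exp_le_one_plus_mult_exp) auto
  also have "\<dots> \<le> 1 + d * e"
  proof -
    have "exp ((b - 1) * e) \<le> exp (b - 1)" using e gt_one by (simp add: mult_left_le)
    thus ?thesis using e gt_one unfolding d_def by (simp add: mult_left_mono mult_ac)
  qed
  finally have "I powr b \<le> (A + B / 4) * (1 + d * e)"
    using assms by (simp add: mult_left_mono)
  also have "\<dots> \<le> A + B / 2 + d * e * A"
  proof -
    have "d * e \<ge> 0" using e gt_one unfolding d_def by simp
    hence "d * e * (B / 4) \<le> B / 4"
      using small assms unfolding e_def d_def by (intro mult_left_le_one_le) auto
    thus ?thesis by (simp add: algebra_simps)
  qed
  finally show ?thesis using near_max unfolding e_def d_def by (simp add: mult_ac)
qed

text \<open>With \<open>A = s - y1 + K\<close>, a left point \<open>s \<ge> y1 + threshold K mu\<close> makes \<open>A\<close> large enough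
  for both lemmas above, and \<open>spread K mu\<close> is the resulting bound on \<open>y - s\<close>.\<close>
definition threshold :: "real \<Rightarrow> real \<Rightarrow> real" where
  "threshold K mu = (2 + (1 + (b - 1) * exp (b - 1)) * 4 powr (b' / b) * tail_factor) * (K + mu + 2 powr b * K)"

definition spread :: "real \<Rightarrow> real \<Rightarrow> real" where
  "spread K mu = 2 * (2 * K + mu + (b - 1) * exp (b - 1) * 4 powr (b' / b) * tail_factor * (K + mu + 2 powr b * K))"

lemma threshold_nonneg: "K \<ge> 0 \<Longrightarrow> mu \<ge> 0 \<Longrightarrow> threshold K mu \<ge> 0"
  and spread_nonneg: "K \<ge> 0 \<Longrightarrow> mu \<ge> 0 \<Longrightarrow> spread K mu \<ge> 0"
  using gt_one tail_factor_pos unfolding threshold_def spread_def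
  by (intro mult_nonneg_nonneg add_nonneg_nonneg; simp)+

lemma threshold_plus_spread_le:
  assumes "K \<ge> 0" "mu \<ge> 0"
  shows "threshold K mu + 2 * spread K mu \<le> (threshold K 1 + 2 * spread K 1) * (mu + 1)"
proof -
  define f where "f mu = threshold K mu + 2 * spread K mu" for mu
  have affine: "f mu = f 0 + (f 1 - f 0) * mu"
    unfolding f_def threshold_def spread_def by (simp add: algebra_simps)
  have "f 0 \<ge> 0" unfolding f_def using threshold_nonneg spread_nonneg assms by simp
  moreover have "f 1 - f 0 = 2 + (1 + (b - 1) * exp (b - 1)) * 4 powr (b' / b) * tail_factor
      + 4 * (1 + (b - 1) * exp (b - 1) * 4 powr (b' / b) * tail_factor)"
    unfolding f_def threshold_def spread_def by (simp add: algebra_simps)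
  hence "f 1 - f 0 \<ge> 0" using gt_one tail_factor_pos by simp
  moreover have "f 1 * (mu + 1) - f mu = (f 1 - f 0) + mu * f 0"
    by (subst affine) (simp add: algebra_simps)
  ultimately have "f mu \<le> f 1 * (mu + 1)"
    using assms mult_nonneg_nonneg[of mu "f 0"] by linarith
  thus ?thesis unfolding f_def .
qed

end

section \<open>The split estimate\<close>

text \<open>The abstract situation of the main estimate: \<open>I y\<close> plays \<open>\<integral> g(x,y) \<phi>(x) dx\<close>, and
  \<open>m s\<close>, \<open>u s\<close> the masses of \<open>\<phi>\<^bsup>b'\<^esup>\<close> on \<open>[y1,s]\<close> and \<open>(s,\<infinity>)\<close>.\<close>
locale split_Young_estimate = conjugate_exponents +
  fixes y1 K :: real and I m u :: "real \<Rightarrow> real"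
  assumes K_ge_one: "K \<ge> 1"
    and I_nonneg: "I y \<ge> 0"
    and mass_nonneg: "y1 \<le> s \<Longrightarrow> m s \<ge> 0" "y1 \<le> s \<Longrightarrow> u s \<ge> 0"
    and mass_le_one: "y1 \<le> s \<Longrightarrow> m s + u s \<le> 1"
    and split_bound: "y1 \<le> s \<Longrightarrow> s \<le> y \<Longrightarrow> t1 > 0 \<Longrightarrow> t2 > 0 \<Longrightarrow>
      I y \<le> young_majorant t1 (s - y1 + K) (m s) + young_majorant t2 (y - s + K) (u s)"
begin

definition excess :: "real \<Rightarrow> real" where
  "excess y = I y powr b - (y - y1)"

lemma excess_le: "y1 \<le> y \<Longrightarrow> excess y \<le> 2 * K"
  using split_bound_powr_le[of "y - y1 + K" K "m y" "u y" "I y"] split_bound[of y y]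
    K_ge_one mass_nonneg mass_le_one I_nonneg
  unfolding excess_def by auto

text \<open>Two points beyond the threshold at which \<open>I\<^sup>b\<close> is within \<open>mu\<close> of its maximum are close:
  near-maximality at the left point \<open>s\<close> leaves little mass to the right of \<open>s\<close>, which in turn
  caps the length \<open>y - s\<close> for which the right point can stay near-maximal.\<close>
lemma near_maximal_points_close:
  assumes mu: "mu \<ge> 0" and far: "y1 + threshold K mu \<le> s" and "s \<le> y"
    and near_max: "excess s \<ge> - mu" "excess y \<ge> - mu"
  shows "y - s \<le> spread K mu"
proof -
  define N where "N = K + mu + 2 powr b * K"
  define A where "A = s - y1 + K"
  define r where "r = 4 powr (b' / b)"
  define d where "d = (b - 1) * exp (b - 1)"
  define U where "U = tail_factor * N / A"
  have pos: "r > 0" "d \<ge> 0" "tail_factor > 0" "2 powr b * K \<ge> 0"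
    using gt_one tail_factor_pos K_ge_one unfolding r_def d_def by auto
  hence N: "N \<ge> K + mu" "N \<ge> 1" using mu K_ge_one unfolding N_def by linarith+
  have far': "2 * N + r * tail_factor * N + d * r * tail_factor * N \<le> A"
    using far K_ge_one unfolding threshold_def A_def N_def r_def d_def by (simp add: algebra_simps)
  have "r * tail_factor * N \<ge> 0" "d * r * tail_factor * N \<ge> 0" using pos N by auto
  hence A: "A > 0" "A \<ge> 2 * (K + mu)" "r * tail_factor * N \<le> A" "d * r * tail_factor * N \<le> A"
    using far' N by auto
  have s: "y1 \<le> s" using A(2) mu K_ge_one unfolding A_def by (simp add: algebra_simps)
  have "u s \<le> U"
    unfolding U_def N_def
    using split_bound_tail_mass_le[OF A(1) _ mu A(2) mass_nonneg[OF s] mass_le_one[OF s] I_nonneg[of s]]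
      split_bound[OF s order_refl] near_max(1) K_ge_one
    unfolding A_def excess_def by auto
  moreover have "r * U \<le> 1" "d * (r * U) \<le> 1"
    using A unfolding U_def by (simp_all add: field_simps)
  ultimately have "y - s + K \<le> 2 * (2 * K + mu + d * (r * U) * A)"
    using split_bound_head_length_le[of A "y - s + K" K mu "m s" "u s" U "I y"] A(1)
      split_bound[OF s \<open>s \<le> y\<close>] near_max(2) K_ge_one mu mass_nonneg[OF s] mass_le_one[OF s] I_nonneg
      \<open>s \<le> y\<close>
    unfolding A_def excess_def r_def d_def by auto
  moreover have "d * (r * U) * A = d * r * tail_factor * N" using A(1) unfolding U_def by simp
  ultimately have "y - s + K \<le> 2 * (2 * K + mu + d * r * tail_factor * N)" by simp
  thus ?thesis using K_ge_one unfolding spread_def N_def r_def d_def by linarith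
qed

lemma nn_integral_exp_powr_minus_le:
  "(\<integral>\<^sup>+ y \<in> {y1..}. ennreal (exp (I y powr b - y)) \<partial>lborel)
    \<le> ennreal (2 * exp (2 * K - y1 + 1) * (threshold K 1 + 2 * spread K 1) / (1 - exp (-1/2)))"
proof -
  have K: "K \<ge> 0" using K_ge_one by simp
  have "(\<integral>\<^sup>+ y \<in> {y1..}. ennreal (exp (excess y + - y1)) \<partial>lborel)
    \<le> ennreal (2 * exp (2 * K + - y1 + 1) * (threshold K 1 + 2 * spread K 1) / (1 - exp (-1/2)))"
    by (rule nn_integral_exp_le_of_close_superlevels[OF excess_le _ near_maximal_points_close
          threshold_nonneg[OF K] spread_nonneg[OF K] threshold_plus_spread_le[OF K]]) (use K in auto)
  thus ?thesis unfolding excess_def by simp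
qed

end

section \<open>The kernel\<close>

lemma one_plus_abs_powr_neg_le:
  fixes a x \<gamma> :: real assumes "\<gamma> \<ge> 0" "a \<le> x"
  shows "(1 + \<bar>x\<bar>) powr (-\<gamma>) \<le> (1 + \<bar>a\<bar>) powr \<gamma> * (1 + x - a) powr (-\<gamma>)"
proof -
  have "(1 + \<bar>x\<bar>) powr (-\<gamma>) = (1 + \<bar>a\<bar>) powr \<gamma> * ((1 + \<bar>a\<bar>) * (1 + \<bar>x\<bar>)) powr (-\<gamma>)"
    by (simp add: powr_mult powr_minus)
  also have "((1 + \<bar>a\<bar>) * (1 + \<bar>x\<bar>)) powr (-\<gamma>) \<le> (1 + x - a) powr (-\<gamma>)"
  proof (rule powr_mono2')
    have "(1 + \<bar>a\<bar>) * (1 + \<bar>x\<bar>) = 1 + \<bar>a\<bar> + \<bar>x\<bar> + \<bar>a\<bar> * \<bar>x\<bar>" by (simp add: algebra_simps)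
    moreover have "\<bar>a\<bar> * \<bar>x\<bar> \<ge> 0" "x \<le> \<bar>x\<bar>" "- a \<le> \<bar>a\<bar>" by auto
    ultimately show "1 + x - a \<le> (1 + \<bar>a\<bar>) * (1 + \<bar>x\<bar>)" by linarith
  qed (use assms in auto)
  finally show ?thesis by (simp add: mult_left_mono)
qed

lemma gker_nonneg: "H > 0 \<Longrightarrow> gker H \<gamma> q x y \<ge> 0"
  unfolding gker_def by simp

lemma borel_measurable_gker [measurable]: "(\<lambda>x. gker H \<gamma> q x y) \<in> borel_measurable borel"
  unfolding gker_def by measurable

lemma gker_powr_le_of_le:
  fixes H \<gamma> q b x y y1 :: real
  assumes "H > 0" "\<gamma> \<ge> 0" "b \<ge> 0" "y1 \<le> x" "x \<le> y"
  shows "gker H \<gamma> q x y powr b \<le> 1 + b * exp (b * H) * H * (1 + \<bar>y1\<bar>) powr \<gamma> * (1 + x - y1) powr (-\<gamma>)"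
proof -
  define h where "h = H * (1 + \<bar>x\<bar>) powr (-\<gamma>)"
  have "(1 + \<bar>x\<bar>) powr (-\<gamma>) \<le> 1 powr (-\<gamma>)" using assms by (intro powr_mono2') auto
  hence h: "0 \<le> h" "h \<le> H" unfolding h_def using assms by (auto simp: mult_left_le)
  have "gker H \<gamma> q x y powr b = (1 + h) powr b" using assms unfolding gker_def h_def by simp
  also have "\<dots> \<le> exp (b * h)" using h assms by (intro powr_le_exp_mult) auto
  also have "\<dots> \<le> 1 + b * h * exp (b * h)" using h assms by (intro exp_le_one_plus_mult_exp) auto
  also have "\<dots> \<le> 1 + b * h * exp (b * H)"
    using h assms by (intro add_left_mono mult_left_mono) (auto intro: mult_left_mono)
  also have "\<dots> \<le> 1 + b * exp (b * H) * H * (1 + \<bar>y1\<bar>) powr \<gamma> * (1 + x - y1) powr (-\<gamma>)"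
  proof -
    have "h \<le> H * ((1 + \<bar>y1\<bar>) powr \<gamma> * (1 + x - y1) powr (-\<gamma>))"
      unfolding h_def using one_plus_abs_powr_neg_le[of \<gamma> y1 x] assms by (intro mult_left_mono) auto
    hence "b * exp (b * H) * h \<le> b * exp (b * H) * (H * ((1 + \<bar>y1\<bar>) powr \<gamma> * (1 + x - y1) powr (-\<gamma>)))"
      using assms by (intro mult_left_mono) auto
    thus ?thesis by (simp add: mult_ac)
  qed
  finally show ?thesis .
qed

lemma gker_powr_of_less:
  fixes H \<gamma> q b x y :: real assumes "H > 0" "y < x"
  shows "gker H \<gamma> q x y powr b = H powr b * exp (b / q * (y - x))"
  using assms unfolding gker_def by (simp add: powr_def ln_mult exp_add[symmetric] algebra_simps)

text \<open>The summand \<open>1\<close> only serves to make the slack at least \<open>1\<close>.\<close>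
definition gker_slack :: "real \<Rightarrow> real \<Rightarrow> real \<Rightarrow> real \<Rightarrow> real \<Rightarrow> real" where
  "gker_slack H \<gamma> q b y1 = 1 + b * exp (b * H) * H * (1 + \<bar>y1\<bar>) powr \<gamma> / (\<gamma> - 1) + H powr b * q / b"

lemma nn_integral_gker_powr_head:
  fixes H \<gamma> q b y1 s y :: real
  assumes "H > 0" "\<gamma> > 1" "b > 0" "q > 0" "y1 \<le> s" "s \<le> y"
  shows "(\<integral>\<^sup>+ x \<in> {y1..s}. ennreal (gker H \<gamma> q x y powr b) \<partial>lborel) \<le> ennreal (s - y1 + gker_slack H \<gamma> q b y1)"
proof -
  define c where "c = b * exp (b * H) * H * (1 + \<bar>y1\<bar>) powr \<gamma>"
  have c: "c \<ge> 0" using assms unfolding c_def by simp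
  have "(\<integral>\<^sup>+ x \<in> {y1..s}. ennreal (gker H \<gamma> q x y powr b) \<partial>lborel)
      \<le> (\<integral>\<^sup>+ x \<in> {y1..s}. ennreal (1 + c * (1 + x - y1) powr (-\<gamma>)) \<partial>lborel)"
    using gker_powr_le_of_le[of H \<gamma> b y1 _ y q] assms
    by (intro nn_integral_mono) (auto split: split_indicator intro!: ennreal_leI simp: c_def simp del: ennreal_plus)
  also have "\<dots> \<le> emeasure lborel {y1..s} + ennreal (c / (\<gamma> - 1))"
    using assms c by (intro nn_integral_one_plus_shifted_powr_le) auto
  also have "\<dots> = ennreal (s - y1 + c / (\<gamma> - 1))"
    using assms c by (simp add: ennreal_plus)
  also have "\<dots> \<le> ennreal (s - y1 + gker_slack H \<gamma> q b y1)"
    using assms unfolding gker_slack_def c_def by (intro ennreal_leI) simp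
  finally show ?thesis .
qed

lemma nn_integral_gker_powr_tail:
  fixes H \<gamma> q b y1 s y :: real
  assumes "H > 0" "\<gamma> > 1" "b > 0" "q > 0" "y1 \<le> s" "s \<le> y"
  shows "(\<integral>\<^sup>+ x \<in> {s<..}. ennreal (gker H \<gamma> q x y powr b) \<partial>lborel) \<le> ennreal (y - s + gker_slack H \<gamma> q b y1)"
proof -
  define c where "c = b * exp (b * H) * H * (1 + \<bar>y1\<bar>) powr \<gamma>"
  have c: "c \<ge> 0" using assms unfolding c_def by simp
  have "(\<integral>\<^sup>+ x \<in> {s<..}. ennreal (gker H \<gamma> q x y powr b) \<partial>lborel)
      = (\<integral>\<^sup>+ x \<in> {s<..y}. ennreal (gker H \<gamma> q x y powr b) \<partial>lborel)
      + (\<integral>\<^sup>+ x \<in> {y<..}. ennreal (gker H \<gamma> q x y powr b) \<partial>lborel)"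
    using assms by (subst nn_integral_add[symmetric]) (auto intro!: nn_integral_cong split: split_indicator)
  also have "(\<integral>\<^sup>+ x \<in> {s<..y}. ennreal (gker H \<gamma> q x y powr b) \<partial>lborel)
      \<le> (\<integral>\<^sup>+ x \<in> {s<..y}. ennreal (1 + c * (1 + x - y1) powr (-\<gamma>)) \<partial>lborel)"
    using gker_powr_le_of_le[of H \<gamma> b y1 _ y q] assms
    by (intro nn_integral_mono) (auto split: split_indicator intro!: ennreal_leI simp: c_def simp del: ennreal_plus)
  also have "\<dots> \<le> emeasure lborel {s<..y} + ennreal (c / (\<gamma> - 1))"
    using assms c by (intro nn_integral_one_plus_shifted_powr_le) auto
  also have "(\<integral>\<^sup>+ x \<in> {y<..}. ennreal (gker H \<gamma> q x y powr b) \<partial>lborel)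
      \<le> (\<integral>\<^sup>+ x \<in> {y..}. ennreal (H powr b) * ennreal (exp (b / q * (y - x))) \<partial>lborel)"
    using gker_powr_of_less[of H y _ \<gamma> q b] assms
    by (intro nn_integral_mono) (auto split: split_indicator simp: ennreal_mult)
  also have "\<dots> = ennreal (H powr b) * ennreal (1 / (b / q))"
    using nn_integral_exp_decay[of "b / q" y] assms by (simp add: nn_integral_cmult mult.assoc)
  also have "emeasure lborel {s<..y} + ennreal (c / (\<gamma> - 1)) + ennreal (H powr b) * ennreal (1 / (b / q))
      = ennreal (y - s + c / (\<gamma> - 1) + H powr b * q / b)"
    using assms c by (simp add: ennreal_plus ennreal_mult[symmetric])
  also have "\<dots> \<le> ennreal (y - s + gker_slack H \<gamma> q b y1)"
    unfolding gker_slack_def c_def by (intro ennreal_leI) simp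
  finally show ?thesis by (simp add: add_mono)
qed

context conjugate_exponents
begin

lemma nn_integral_gker_split_le:
  fixes H \<gamma> q y1 s y t1 t2 :: real and \<phi> :: "real \<Rightarrow> real"
  assumes "H > 0" "\<gamma> > 1" "q > 0"
    and [measurable]: "\<phi> \<in> borel_measurable lborel"
    and \<phi>: "\<And>x. \<phi> x \<ge> 0" "\<And>x. x < y1 \<Longrightarrow> \<phi> x = 0"
    and "y1 \<le> s" "s \<le> y" "t1 > 0" "t2 > 0"
  defines "K \<equiv> gker_slack H \<gamma> q b y1"
  shows "(\<integral>\<^sup>+ x. ennreal (gker H \<gamma> q x y * \<phi> x) \<partial>lborel)
    \<le> (ennreal (t1 powr b / b) * ennreal (s - y1 + K)
        + ennreal (t1 powr (-b') / b') * (\<integral>\<^sup>+ x \<in> {y1..s}. ennreal (\<phi> x powr b') \<partial>lborel))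
      + (ennreal (t2 powr b / b) * ennreal (y - s + K)
        + ennreal (t2 powr (-b') / b') * (\<integral>\<^sup>+ x \<in> {s<..}. ennreal (\<phi> x powr b') \<partial>lborel))"
proof -
  note g = gker_nonneg[OF assms(1)]
  have "(\<integral>\<^sup>+ x. ennreal (gker H \<gamma> q x y * \<phi> x) \<partial>lborel)
      = (\<integral>\<^sup>+ x \<in> {y1..s}. ennreal (gker H \<gamma> q x y * \<phi> x) \<partial>lborel)
        + (\<integral>\<^sup>+ x \<in> {s<..}. ennreal (gker H \<gamma> q x y * \<phi> x) \<partial>lborel)"
    using \<phi>(2) by (subst nn_integral_add[symmetric]) (auto intro!: nn_integral_cong split: split_indicator)
  also have "\<dots> \<le> (ennreal (t1 powr b / b) * (\<integral>\<^sup>+ x \<in> {y1..s}. ennreal (gker H \<gamma> q x y powr b) \<partial>lborel)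
        + ennreal (t1 powr (-b') / b') * (\<integral>\<^sup>+ x \<in> {y1..s}. ennreal (\<phi> x powr b') \<partial>lborel))
      + (ennreal (t2 powr b / b) * (\<integral>\<^sup>+ x \<in> {s<..}. ennreal (gker H \<gamma> q x y powr b) \<partial>lborel)
        + ennreal (t2 powr (-b') / b') * (\<integral>\<^sup>+ x \<in> {s<..}. ennreal (\<phi> x powr b') \<partial>lborel))"
    using g \<phi>(1) assms by (intro add_mono nn_integral_mult_le_Young) auto
  also have "\<dots> \<le> (ennreal (t1 powr b / b) * ennreal (s - y1 + K)
        + ennreal (t1 powr (-b') / b') * (\<integral>\<^sup>+ x \<in> {y1..s}. ennreal (\<phi> x powr b') \<partial>lborel))
      + (ennreal (t2 powr b / b) * ennreal (y - s + K)
        + ennreal (t2 powr (-b') / b') * (\<integral>\<^sup>+ x \<in> {s<..}. ennreal (\<phi> x powr b') \<partial>lborel))"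
    using assms gt_one unfolding K_def
    by (intro add_mono mult_left_mono order_refl nn_integral_gker_powr_head nn_integral_gker_powr_tail) auto
  finally show ?thesis .
qed

lemma split_Young_estimate_gker:
  fixes H \<gamma> q y1 :: real and \<phi> :: "real \<Rightarrow> real"
  assumes "H > 0" "\<gamma> > 1" "q > 0"
    and [measurable]: "\<phi> \<in> borel_measurable lborel"
    and \<phi>: "\<And>x. \<phi> x \<ge> 0" "\<And>x. x < y1 \<Longrightarrow> \<phi> x = 0"
    and norm: "(\<integral>\<^sup>+ x \<in> {y1..}. ennreal (\<phi> x powr b') \<partial>lborel) \<le> 1"
  shows "split_Young_estimate b b' y1 (gker_slack H \<gamma> q b y1)
    (\<lambda>y. enn2real (\<integral>\<^sup>+ x. ennreal (gker H \<gamma> q x y * \<phi> x) \<partial>lborel))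
    (\<lambda>s. enn2real (\<integral>\<^sup>+ x \<in> {y1..s}. ennreal (\<phi> x powr b') \<partial>lborel))
    (\<lambda>s. enn2real (\<integral>\<^sup>+ x \<in> {s<..}. ennreal (\<phi> x powr b') \<partial>lborel))"
proof (intro split_Young_estimate.intro conjugate_exponents_axioms split_Young_estimate_axioms.intro)
  let ?M1 = "\<lambda>s. \<integral>\<^sup>+ x \<in> {y1..s}. ennreal (\<phi> x powr b') \<partial>lborel"
  let ?M2 = "\<lambda>s. \<integral>\<^sup>+ x \<in> {s<..}. ennreal (\<phi> x powr b') \<partial>lborel"
  have total: "?M1 s + ?M2 s \<le> 1" if "y1 \<le> s" for s
  proof -
    have "?M1 s + ?M2 s = (\<integral>\<^sup>+ x \<in> {y1..}. ennreal (\<phi> x powr b') \<partial>lborel)"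
      using that by (subst nn_integral_add[symmetric]) (auto intro!: nn_integral_cong split: split_indicator)
    thus ?thesis using norm by simp
  qed
  have finite: "?M1 s < top" "?M2 s < top" if "y1 \<le> s" for s
  proof -
    have "?M1 s \<le> 1" by (rule order_trans[OF add_increasing2[OF zero_le order_refl] total[OF that]])
    moreover have "?M2 s \<le> 1" by (rule order_trans[OF add_increasing[OF zero_le order_refl] total[OF that]])
    ultimately show "?M1 s < top" "?M2 s < top" using ennreal_one_less_top by (blast intro: le_less_trans)+
  qed
  show K: "gker_slack H \<gamma> q b y1 \<ge> 1" using assms gt_one unfolding gker_slack_def by simp
  show "enn2real (?M1 s) + enn2real (?M2 s) \<le> 1" if "y1 \<le> s" for s
  proof -
    have "ennreal (enn2real (?M1 s) + enn2real (?M2 s)) = ?M1 s + ?M2 s"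
      using finite[OF that] by (simp add: ennreal_plus[OF enn2real_nonneg enn2real_nonneg] del: ennreal_plus)
    hence "ennreal (enn2real (?M1 s) + enn2real (?M2 s)) \<le> 1" using total[OF that] by simp
    thus ?thesis by (simp del: ennreal_plus)
  qed
  show "enn2real (\<integral>\<^sup>+ x. ennreal (gker H \<gamma> q x y * \<phi> x) \<partial>lborel)
      \<le> young_majorant t1 (s - y1 + gker_slack H \<gamma> q b y1) (enn2real (?M1 s))
        + young_majorant t2 (y - s + gker_slack H \<gamma> q b y1) (enn2real (?M2 s))"
    if "y1 \<le> s" "s \<le> y" "t1 > 0" "t2 > 0" for s y t1 t2
    using nn_integral_gker_split_le[OF assms(1-4) \<phi> that] that K finite[OF that(1)]
    by (intro enn2real_le_young_majorant_add) auto
qed simp_all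

lemma nn_integral_exp_neg_Ffun_le:
  fixes H \<gamma> q y1 :: real and \<phi> :: "real \<Rightarrow> real"
  assumes "H > 0" "\<gamma> > 1" "q > 0"
    and meas: "set_borel_measurable lborel {y1..} \<phi>" and nonneg: "\<forall>x \<ge> y1. \<phi> x \<ge> 0"
    and norm: "(\<integral>\<^sup>+ x \<in> {y1..}. ennreal (\<phi> x powr b') \<partial>lborel) \<le> 1"
  defines "K \<equiv> gker_slack H \<gamma> q b y1"
  shows "(\<integral>\<^sup>+ y \<in> {y1..}. ennreal (exp (- Ffun y1 H b \<gamma> q \<phi> y)) \<partial>lborel)
    \<le> ennreal (2 * exp (2 * K - y1 + 1) * (threshold K 1 + 2 * spread K 1) / (1 - exp (-1/2)))"
proof -
  define \<phi>0 where "\<phi>0 x = indicator {y1..} x * \<phi> x" for x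
  have [measurable]: "\<phi>0 \<in> borel_measurable lborel"
    using meas unfolding set_borel_measurable_def \<phi>0_def by simp
  have \<phi>0: "\<phi>0 x \<ge> 0" "x < y1 \<Longrightarrow> \<phi>0 x = 0" for x
    unfolding \<phi>0_def using nonneg by (auto split: split_indicator)
  have "(\<integral>\<^sup>+ x \<in> {y1..}. ennreal (\<phi>0 x powr b') \<partial>lborel) = (\<integral>\<^sup>+ x \<in> {y1..}. ennreal (\<phi> x powr b') \<partial>lborel)"
    unfolding \<phi>0_def by (intro nn_integral_cong) (simp split: split_indicator)
  with norm have norm0: "(\<integral>\<^sup>+ x \<in> {y1..}. ennreal (\<phi>0 x powr b') \<partial>lborel) \<le> 1" by simp
  let ?I = "\<lambda>y. enn2real (\<integral>\<^sup>+ x. ennreal (gker H \<gamma> q x y * \<phi>0 x) \<partial>lborel)"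
  interpret split_Young_estimate b b' y1 K ?I
    "\<lambda>s. enn2real (\<integral>\<^sup>+ x \<in> {y1..s}. ennreal (\<phi>0 x powr b') \<partial>lborel)"
    "\<lambda>s. enn2real (\<integral>\<^sup>+ x \<in> {s<..}. ennreal (\<phi>0 x powr b') \<partial>lborel)"
    unfolding K_def using assms \<phi>0 norm0 by (intro split_Young_estimate_gker) auto
  have "(LBINT x:{y1..}. gker H \<gamma> q x y * \<phi> x) = ?I y" for y
  proof -
    have "(\<lambda>x. indicator {y1..} x *\<^sub>R (gker H \<gamma> q x y * \<phi> x)) = (\<lambda>x. gker H \<gamma> q x y * \<phi>0 x)"
      unfolding \<phi>0_def by (simp add: mult_ac)
    hence "set_borel_measurable lborel {y1..} (\<lambda>x. gker H \<gamma> q x y * \<phi> x)"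
      unfolding set_borel_measurable_def by simp
    hence "(LBINT x:{y1..}. gker H \<gamma> q x y * \<phi> x) = enn2real (\<integral>\<^sup>+ x \<in> {y1..}. ennreal (gker H \<gamma> q x y * \<phi> x) \<partial>lborel)"
      using gker_nonneg[OF assms(1)] nonneg by (intro set_integral_eq_nn_integral) auto
    thus ?thesis unfolding \<phi>0_def by (simp add: mult_ac ennreal_mult' indicator_mult_ennreal cong: nn_integral_cong)
  qed
  hence "(\<integral>\<^sup>+ y \<in> {y1..}. ennreal (exp (- Ffun y1 H b \<gamma> q \<phi> y)) \<partial>lborel)
      = (\<integral>\<^sup>+ y \<in> {y1..}. ennreal (exp (?I y powr b - y)) \<partial>lborel)"
    unfolding Ffun_def by simp
  also have "\<dots> \<le> ennreal (2 * exp (2 * K - y1 + 1) * (threshold K 1 + 2 * spread K 1) / (1 - exp (-1/2)))"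
    by (rule nn_integral_exp_powr_minus_le)
  finally show ?thesis .
qed

end

theorem lemma3:
  fixes y1 H \<beta> \<beta>' \<gamma> q :: real
  assumes "H > 0" and "\<beta> > 1" and "\<gamma> > 1" and "q > 0"
    and "1 / \<beta> + 1 / \<beta>' = 1"
  shows "\<exists>C::real. \<forall>\<phi> :: real \<Rightarrow> real.
           set_borel_measurable lborel {y1..} \<phi> \<longrightarrow>
           (\<forall>x \<ge> y1. \<phi> x \<ge> 0) \<longrightarrow>
           (\<integral>\<^sup>+ x \<in> {y1..}. ennreal (\<phi> x powr \<beta>') \<partial>lborel) \<le> 1 \<longrightarrow>
           (\<integral>\<^sup>+ y \<in> {y1..}. ennreal (exp (- Ffun y1 H \<beta> \<gamma> q \<phi> y)) \<partial>lborel) \<le> ennreal C"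
proof -
  interpret conjugate_exponents \<beta> \<beta>' using assms by unfold_locales
  show ?thesis using nn_integral_exp_neg_Ffun_le[OF assms(1,3,4)] by blast
qed

end
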